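(* Let $X\subset\mathbb{R}^n$ be a subanalytic set and $f\in\mathcal{C}(X)$. Then there exists a subanalytic function $h:X\to(0,+\infty)$ such that $|f(x)|\le h(x)$ for all $x\in X$.
   Context: "Subanalytic" means globally subanalytic: definable in the expansion of the real field by all restricted analytic functions (functions $\mathbb{R}^k\to\mathbb{R}$ agreeing on $[-1,1]^k$ with a function analytic on a neighbourhood of $[-1,1]^k$ and vanishing outside it); a function is subanalytic if its graph is; $\log$ is not subanalytic. $\mathcal{C}(X)$ is the $\mathbb{R}$-algebra of real-valued functions on $X$ generated by all subanalytic functions $X\to\mathbb{R}$ and all functions $x\mapsto\log g(x)$ with $g:X\to(0,+\infty)$ subanalytic. *)

theory Defs
  imports "HOL-Analysis.Analysis"
begin

text \<open>Points of R^n are represented as real lists of length n.\<close>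

definition Ln :: "nat \<Rightarrow> real list set" where
  "Ln n = {xs. length xs = n}"

definition real_analytic_at :: "nat \<Rightarrow> (real list \<Rightarrow> real) \<Rightarrow> real list \<Rightarrow> bool" where
  "real_analytic_at k g a \<longleftrightarrow>
     (\<exists>c :: nat list \<Rightarrow> real. \<exists>r > 0. \<forall>x. length x = k \<and> (\<forall>i<k. \<bar>x ! i - a ! i\<bar> < r) \<longrightarrow>
        ((\<lambda>\<alpha>. c \<alpha> * (\<Prod>i<k. (x ! i - a ! i) ^ (\<alpha> ! i))) has_sum g x) {\<alpha>. length \<alpha> = k})"

definition restricted_analytic :: "nat \<Rightarrow> (real list \<Rightarrow> real) \<Rightarrow> bool" where
  "restricted_analytic k f \<longleftrightarrow>
     (\<exists>g \<epsilon>. \<epsilon> > 0 \<and>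
        (\<forall>a. length a = k \<and> (\<forall>i<k. \<bar>a ! i\<bar> < 1 + \<epsilon>) \<longrightarrow> real_analytic_at k g a) \<and>
        (\<forall>x. length x = k \<longrightarrow>
            f x = (if (\<forall>i<k. \<bar>x ! i\<bar> \<le> 1) then g x else 0)))"

text \<open>Globally subanalytic subsets of R^n: the smallest structure (in the sense of van den Dries,
  Tame Topology, Ch. 1 (2.1)) on the real line containing all singletons (parameters), the order,
  the graphs of addition and multiplication, and the graphs of all restricted analytic
  functions; i.e. the sets definable with parameters in (R,<,+,*,(restricted analytic)).\<close>
inductive subanalytic :: "nat \<Rightarrow> real list set \<Rightarrow> bool" where
  sa_empty: "subanalytic n {}"
| sa_compl: "subanalytic n A \<Longrightarrow> subanalytic n (Ln n - A)"
| sa_union: "subanalytic n A \<Longrightarrow> subanalytic n B \<Longrightarrow> subanalytic n (A \<union> B)"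
| sa_prod_left: "subanalytic n A \<Longrightarrow> subanalytic (Suc n) {x # xs | x xs. xs \<in> A}"
| sa_prod_right: "subanalytic n A \<Longrightarrow> subanalytic (Suc n) {xs @ [x] | x xs. xs \<in> A}"
| sa_diag: "subanalytic (Suc n) {xs \<in> Ln (Suc n). hd xs = last xs}"
| sa_proj: "subanalytic (Suc n) A \<Longrightarrow> subanalytic n (butlast ` A)"
| sa_const: "subanalytic 1 {[r]}"
| sa_less: "subanalytic 2 {[x, y] | x y. x < y}"
| sa_add: "subanalytic 3 {[x, y, x + y] | x y. True}"
| sa_mult: "subanalytic 3 {[x, y, x * y] | x y. True}"
| sa_ran: "restricted_analytic k f \<Longrightarrow> subanalytic (Suc k) {xs @ [f xs] | xs. length xs = k}"

definition subanalytic_fun :: "nat \<Rightarrow> real list set \<Rightarrow> (real list \<Rightarrow> real) \<Rightarrow> bool" where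
  "subanalytic_fun n X f \<longleftrightarrow> subanalytic (Suc n) {xs @ [f xs] | xs. xs \<in> X}"

text \<open>The R-algebra C(X) of functions X -> R generated by subanalytic functions and logarithms
  of positive subanalytic functions (functions are identified when they agree on X).\<close>
inductive constructible :: "nat \<Rightarrow> real list set \<Rightarrow> (real list \<Rightarrow> real) \<Rightarrow> bool"
  for n :: nat and X :: "real list set" where
  c_sa: "subanalytic_fun n X f \<Longrightarrow> constructible n X f"
| c_log: "subanalytic_fun n X g \<Longrightarrow> (\<forall>x\<in>X. g x > 0) \<Longrightarrow> constructible n X (\<lambda>x. ln (g x))"
| c_add: "constructible n X f \<Longrightarrow> constructible n X g \<Longrightarrow> constructible n X (\<lambda>x. f x + g x)"
| c_mult: "constructible n X f \<Longrightarrow> constructible n X g \<Longrightarrow> constructible n X (\<lambda>x. f x * g x)"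
| c_scale: "constructible n X f \<Longrightarrow> constructible n X (\<lambda>x. c * f x)"
| c_cong: "constructible n X f \<Longrightarrow> (\<forall>x\<in>X. f x = g x) \<Longrightarrow> constructible n X g"

end

theory Submission
  imports Defs
begin

text \<open>A subanalytic \<open>f\<close> is dominated by
  \<open>1 + f\<^sup>2\<close>, and \<open>log g\<close> by \<open>g + 1/g\<close>; dominating functions of sums, products and scalar
  multiples are obtained by the same operations, so it suffices that positive subanalytic functions
  are closed under \<open>+\<close>, \<open>\<times>\<close> and \<open>t \<mapsto> 1/t\<close>. These closure properties come from the graph of the
  combination being a projection of an intersection of coordinate preimages of the graphs of the
  arguments and of the graph of the operation.\<close>

lemma subanalytic_subset_Ln: "subanalytic n A \<Longrightarrow> A \<subseteq> Ln n"
  by (induction rule: subanalytic.induct) (auto simp: Ln_def)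

lemma subanalytic_Ln: "subanalytic n (Ln n)"
  using sa_compl[OF sa_empty, of n] by simp

lemma subanalytic_Int:
  assumes "subanalytic n A" "subanalytic n B"
  shows "subanalytic n (A \<inter> B)"
proof -
  have "A \<inter> B = Ln n - ((Ln n - A) \<union> (Ln n - B))"
    using subanalytic_subset_Ln[OF assms(1)] by auto
  then show ?thesis
    using assms by (metis sa_compl sa_union)
qed

lemma subanalytic_Collect_conj:
  assumes "subanalytic n {xs \<in> Ln n. P xs}" "subanalytic n {xs \<in> Ln n. Q xs}"
  shows "subanalytic n {xs \<in> Ln n. P xs \<and> Q xs}"
proof -
  have "{xs \<in> Ln n. P xs \<and> Q xs} = {xs \<in> Ln n. P xs} \<inter> {xs \<in> Ln n. Q xs}" by auto
  then show ?thesis using subanalytic_Int[OF assms] by simp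
qed

lemma subanalytic_append_left:
  assumes "subanalytic k A"
  shows "subanalytic (m + k) {xs @ ys | xs ys. length xs = m \<and> ys \<in> A}"
proof (induction m)
  case 0
  then show ?case using assms by simp
next
  case (Suc m)
  have "{xs @ ys | xs ys. length xs = Suc m \<and> ys \<in> A}
      = {x # zs | x zs. zs \<in> {xs @ ys | xs ys. length xs = m \<and> ys \<in> A}}"
  proof (intro set_eqI iffI)
    fix w assume "w \<in> {xs @ ys | xs ys. length xs = Suc m \<and> ys \<in> A}"
    then obtain xs' ys where "w = xs' @ ys" "ys \<in> A" "length xs' = Suc m" by blast
    moreover obtain x xs where "xs' = x # xs" "length xs = m"
      using \<open>length xs' = Suc m\<close> by (metis length_Suc_conv)
    ultimately show "w \<in> {x # zs | x zs. zs \<in> {xs @ ys | xs ys. length xs = m \<and> ys \<in> A}}"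
      by auto
  next
    fix w assume "w \<in> {x # zs | x zs. zs \<in> {xs @ ys | xs ys. length xs = m \<and> ys \<in> A}}"
    then obtain x xs ys where "w = (x # xs) @ ys" "ys \<in> A" "length xs = m" by auto
    then show "w \<in> {xs @ ys | xs ys. length xs = Suc m \<and> ys \<in> A}"
      by (intro CollectI exI[of _ "x # xs"] exI[of _ ys]) simp
  qed
  then show ?case using sa_prod_left[OF Suc.IH] by simp
qed

lemma subanalytic_append_right:
  assumes "subanalytic k A"
  shows "subanalytic (k + m) {ys @ xs | ys xs. ys \<in> A \<and> length xs = m}"
proof (induction m)
  case 0
  then show ?case using assms by simp
next
  case (Suc m)
  have "{ys @ xs | ys xs. ys \<in> A \<and> length xs = Suc m}
      = {zs @ [x] | x zs. zs \<in> {ys @ xs | ys xs. ys \<in> A \<and> length xs = m}}"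
  proof (intro set_eqI iffI)
    fix w assume "w \<in> {ys @ xs | ys xs. ys \<in> A \<and> length xs = Suc m}"
    then obtain ys xs' where "w = ys @ xs'" "ys \<in> A" "length xs' = Suc m" by blast
    moreover obtain xs x where "xs' = xs @ [x]" "length xs = m"
      using \<open>length xs' = Suc m\<close> by (metis length_Suc_conv_rev)
    ultimately show "w \<in> {zs @ [x] | x zs. zs \<in> {ys @ xs | ys xs. ys \<in> A \<and> length xs = m}}"
      by auto
  next
    fix w assume "w \<in> {zs @ [x] | x zs. zs \<in> {ys @ xs | ys xs. ys \<in> A \<and> length xs = m}}"
    then obtain ys xs x where "w = ys @ (xs @ [x])" "ys \<in> A" "length xs = m" by auto
    then show "w \<in> {ys @ xs | ys xs. ys \<in> A \<and> length xs = Suc m}"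
      by (intro CollectI exI[of _ ys] exI[of _ "xs @ [x]"]) simp
  qed
  then show ?case using sa_prod_right[OF Suc.IH] by simp
qed

lemma subanalytic_append:
  assumes A: "subanalytic n A" and B: "subanalytic k B"
  shows "subanalytic (n + k) {xs @ ys | xs ys. xs \<in> A \<and> ys \<in> B}"
proof -
  have "{xs @ ys | xs ys. xs \<in> A \<and> ys \<in> B}
      = {xs @ ys | xs ys. xs \<in> A \<and> length ys = k} \<inter> {xs @ ys | xs ys. length xs = n \<and> ys \<in> B}"
  proof (intro set_eqI iffI)
    fix w assume "w \<in> {xs @ ys | xs ys. xs \<in> A \<and> ys \<in> B}"
    then show "w \<in> {xs @ ys | xs ys. xs \<in> A \<and> length ys = k} \<inter> {xs @ ys | xs ys. length xs = n \<and> ys \<in> B}"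
      using subanalytic_subset_Ln[OF A] subanalytic_subset_Ln[OF B] by (auto simp: Ln_def)
  next
    fix w assume "w \<in> {xs @ ys | xs ys. xs \<in> A \<and> length ys = k} \<inter> {xs @ ys | xs ys. length xs = n \<and> ys \<in> B}"
    then obtain a y x b where "w = a @ y" "a \<in> A" "w = x @ b" "length x = n" "b \<in> B" by blast
    moreover have "length a = n" using \<open>a \<in> A\<close> subanalytic_subset_Ln[OF A] by (auto simp: Ln_def)
    ultimately have "a = x" "y = b" by (simp_all add: append_eq_append_conv)
    with \<open>w = a @ y\<close> \<open>a \<in> A\<close> \<open>b \<in> B\<close> show "w \<in> {xs @ ys | xs ys. xs \<in> A \<and> ys \<in> B}"
      by blast
  qed
  then show ?thesis
    using subanalytic_Int[OF subanalytic_append_right[OF A] subanalytic_append_left[OF B]]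
    by simp
qed

lemma subanalytic_project:
  "subanalytic (n + k) A \<Longrightarrow> subanalytic n {xs. \<exists>ys. length ys = k \<and> xs @ ys \<in> A}"
proof (induction k arbitrary: A)
  case 0
  then show ?case by simp
next
  case (Suc k)
  have "[] \<notin> A" using subanalytic_subset_Ln[OF Suc.prems] by (auto simp: Ln_def)
  have "{xs. \<exists>ys. length ys = Suc k \<and> xs @ ys \<in> A}
      = {xs. \<exists>ys. length ys = k \<and> xs @ ys \<in> butlast ` A}"
  proof (intro set_eqI iffI)
    fix xs assume "xs \<in> {xs. \<exists>ys. length ys = Suc k \<and> xs @ ys \<in> A}"
    then obtain ys' y where "length ys' = k" "xs @ ys' @ [y] \<in> A"
      by (auto simp: length_Suc_conv_rev)
    moreover have "xs @ ys' = butlast (xs @ ys' @ [y])" by (simp add: butlast_append)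
    ultimately show "xs \<in> {xs. \<exists>ys. length ys = k \<and> xs @ ys \<in> butlast ` A}" by blast
  next
    fix xs assume "xs \<in> {xs. \<exists>ys. length ys = k \<and> xs @ ys \<in> butlast ` A}"
    then obtain ys w where "length ys = k" "w \<in> A" "xs @ ys = butlast w" by blast
    moreover have "w = butlast w @ [last w]"
      using \<open>w \<in> A\<close> \<open>[] \<notin> A\<close> by (metis append_butlast_last_id)
    ultimately have "xs @ ys @ [last w] \<in> A" by (metis append_assoc)
    then show "xs \<in> {xs. \<exists>ys. length ys = Suc k \<and> xs @ ys \<in> A}"
      using \<open>length ys = k\<close> by (intro CollectI exI[of _ "ys @ [last w]"]) simp
  qed
  moreover have "subanalytic (n + k) (butlast ` A)" using sa_proj Suc.prems by simp
  ultimately show ?case using Suc.IH by simp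
qed

lemma subanalytic_exists_suffix:
  assumes "subanalytic (n + k) {w \<in> Ln (n + k). P w}"
  shows "subanalytic n {xs \<in> Ln n. \<exists>ys. length ys = k \<and> P (xs @ ys)}"
proof -
  have "{xs. \<exists>ys. length ys = k \<and> xs @ ys \<in> {w \<in> Ln (n + k). P w}}
      = {xs \<in> Ln n. \<exists>ys. length ys = k \<and> P (xs @ ys)}" by (auto simp: Ln_def)
  then show ?thesis using subanalytic_project[OF assms] by simp
qed

lemma subanalytic_nth_eq_nth_less:
  assumes "i < j" "j < m"
  shows "subanalytic m {w \<in> Ln m. w ! i = w ! j}"
proof -
  define d where "d = j - i"
  define D where "D = {xs \<in> Ln (Suc d). hd xs = last xs}"
  have "subanalytic (i + (Suc d + (m - Suc j)))
      {as @ zs | as zs. length as = i \<and> zs \<in> {ds @ bs | ds bs. ds \<in> D \<and> length bs = m - Suc j}}"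
    unfolding D_def by (intro subanalytic_append_left subanalytic_append_right sa_diag)
  moreover have "i + (Suc d + (m - Suc j)) = m" using assms by (simp add: d_def)
  moreover have "{as @ zs | as zs. length as = i \<and> zs \<in> {ds @ bs | ds bs. ds \<in> D \<and> length bs = m - Suc j}}
      = {w \<in> Ln m. w ! i = w ! j}"
  proof (intro set_eqI iffI)
    fix w
    assume "w \<in> {as @ zs | as zs. length as = i \<and> zs \<in> {ds @ bs | ds bs. ds \<in> D \<and> length bs = m - Suc j}}"
    then obtain as ds bs where w: "w = as @ ds @ bs" "length as = i" "length bs = m - Suc j"
      and ds: "length ds = Suc d" "hd ds = last ds"
      by (auto simp: D_def Ln_def)
    have "ds \<noteq> []" using ds(1) by auto
    then have "hd ds = ds ! 0" "last ds = ds ! d"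
      using ds(1) by (simp_all add: hd_conv_nth last_conv_nth)
    then have "w ! i = hd ds" "w ! j = last ds"
      using w ds(1) assms by (auto simp: nth_append d_def)
    then show "w \<in> {w \<in> Ln m. w ! i = w ! j}"
      using w ds assms by (auto simp: Ln_def d_def)
  next
    fix w assume "w \<in> {w \<in> Ln m. w ! i = w ! j}"
    then have lw: "length w = m" and eq: "w ! i = w ! j" by (auto simp: Ln_def)
    define ds where "ds = take (Suc d) (drop i w)"
    have "i + Suc d = Suc j" using assms by (simp add: d_def)
    then have "take i w @ ds = take (Suc j) w" unfolding ds_def by (metis take_add)
    then have "w = take i w @ ds @ drop (Suc j) w" by (metis append_assoc append_take_drop_id)
    moreover have "ds \<in> D"
      using lw eq assms by (auto simp: D_def Ln_def ds_def d_def hd_conv_nth last_conv_nth)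
    ultimately show "w \<in> {as @ zs | as zs. length as = i \<and> zs \<in> {ds @ bs | ds bs. ds \<in> D \<and> length bs = m - Suc j}}"
      using lw assms by force
  qed
  ultimately show ?thesis by simp
qed

lemma subanalytic_nth_eq_nth:
  assumes "i < m" "j < m"
  shows "subanalytic m {w \<in> Ln m. w ! i = w ! j}"
proof (cases i j rule: linorder_cases)
  case less
  then show ?thesis using subanalytic_nth_eq_nth_less assms by blast
next
  case equal
  then show ?thesis using subanalytic_Ln by simp
next
  case greater
  have "{w \<in> Ln m. w ! i = w ! j} = {w \<in> Ln m. w ! j = w ! i}" by auto
  then show ?thesis using subanalytic_nth_eq_nth_less[OF greater assms(1)] by simp
qed

lemma subanalytic_all_nth_eq_nth:
  fixes k :: nat
  assumes "\<forall>l<k. f l < m \<and> g l < m"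
  shows "subanalytic m {w \<in> Ln m. \<forall>l<k. w ! f l = w ! g l}"
  using assms
proof (induction k)
  case 0
  then show ?case using subanalytic_Ln by simp
next
  case (Suc k)
  have "{w \<in> Ln m. \<forall>l<Suc k. w ! f l = w ! g l}
      = {w \<in> Ln m. (\<forall>l<k. w ! f l = w ! g l) \<and> w ! f k = w ! g k}"
    using less_Suc_eq by auto
  moreover have "subanalytic m {w \<in> Ln m. w ! f k = w ! g k}"
    using Suc.prems subanalytic_nth_eq_nth by blast
  ultimately show ?case using subanalytic_Collect_conj Suc by simp
qed

lemma subanalytic_preimage_coords:
  assumes A: "subanalytic k A" and \<sigma>: "\<forall>i<k. \<sigma> i < n"
  shows "subanalytic n {xs \<in> Ln n. map (\<lambda>i. xs ! \<sigma> i) [0..<k] \<in> A}"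
proof -
  define B where "B = {xs @ ys | xs ys. length xs = n \<and> ys \<in> A}"
  have "B \<subseteq> Ln (n + k)"
    using subanalytic_subset_Ln[OF A] by (auto simp: B_def Ln_def)
  then have "B \<inter> {w \<in> Ln (n + k). \<forall>l<k. w ! (n + l) = w ! \<sigma> l}
      = {w \<in> Ln (n + k). w \<in> B \<and> (\<forall>l<k. w ! (n + l) = w ! \<sigma> l)}" by blast
  moreover have "subanalytic (n + k) (B \<inter> {w \<in> Ln (n + k). \<forall>l<k. w ! (n + l) = w ! \<sigma> l})"
    unfolding B_def using \<sigma>
    by (intro subanalytic_Int subanalytic_append_left[OF A] subanalytic_all_nth_eq_nth) auto
  ultimately have "subanalytic n
      {xs \<in> Ln n. \<exists>ys. length ys = k \<and> xs @ ys \<in> B \<and> (\<forall>l<k. (xs @ ys) ! (n + l) = (xs @ ys) ! \<sigma> l)}"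
    by (intro subanalytic_exists_suffix) simp
  moreover have "(\<exists>ys. length ys = k \<and> xs @ ys \<in> B \<and> (\<forall>l<k. (xs @ ys) ! (n + l) = (xs @ ys) ! \<sigma> l))
      \<longleftrightarrow> map (\<lambda>i. xs ! \<sigma> i) [0..<k] \<in> A" if "xs \<in> Ln n" for xs
  proof -
    have B: "xs @ ys \<in> B \<longleftrightarrow> ys \<in> A" for ys
      using that by (auto simp: B_def Ln_def)
    have coords: "(\<forall>l<k. (xs @ ys) ! (n + l) = (xs @ ys) ! \<sigma> l) \<longleftrightarrow> ys = map (\<lambda>i. xs ! \<sigma> i) [0..<k]"
      if "length ys = k" for ys
      using that \<open>xs \<in> Ln n\<close> \<sigma> by (auto simp: Ln_def nth_append list_eq_iff_nth_eq)
    show ?thesis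
    proof
      assume "map (\<lambda>i. xs ! \<sigma> i) [0..<k] \<in> A"
      then show "\<exists>ys. length ys = k \<and> xs @ ys \<in> B \<and> (\<forall>l<k. (xs @ ys) ! (n + l) = (xs @ ys) ! \<sigma> l)"
        using B coords[of "map (\<lambda>i. xs ! \<sigma> i) [0..<k]"]
        by (intro exI[of _ "map (\<lambda>i. xs ! \<sigma> i) [0..<k]"]) simp
    qed (use B coords in auto)
  qed
  then have "{xs \<in> Ln n. \<exists>ys. length ys = k \<and> xs @ ys \<in> B \<and> (\<forall>l<k. (xs @ ys) ! (n + l) = (xs @ ys) ! \<sigma> l)}
      = {xs \<in> Ln n. map (\<lambda>i. xs ! \<sigma> i) [0..<k] \<in> A}" by blast
  ultimately show ?thesis by simp
qed

lemma subanalytic_fun_domain: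
  assumes "subanalytic_fun n X f"
  shows "subanalytic n X"
proof -
  have "{xs @ [f xs] | xs. xs \<in> X} = (\<lambda>xs. xs @ [f xs]) ` X" by blast
  then have "butlast ` {xs @ [f xs] | xs. xs \<in> X} = X" by (simp add: image_image)
  moreover have "subanalytic n (butlast ` {xs @ [f xs] | xs. xs \<in> X})"
    using assms unfolding subanalytic_fun_def by (rule sa_proj)
  ultimately show ?thesis by simp
qed

lemma subanalytic_fun_const:
  assumes "subanalytic n X"
  shows "subanalytic_fun n X (\<lambda>_. c)"
proof -
  have "{xs @ [c] | xs. xs \<in> X} = {xs @ ys | xs ys. xs \<in> X \<and> ys \<in> {[c]}}" by blast
  then show ?thesis
    using subanalytic_append[OF assms sa_const] unfolding subanalytic_fun_def by simp
qed

lemma subanalytic_fun_combine: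
  assumes F: "subanalytic_fun n X f" and G: "subanalytic_fun n X g" and R: "subanalytic 3 R"
    and H: "\<forall>x\<in>X. \<forall>z. [f x, g x, z] \<in> R \<longleftrightarrow> z = h x"
  shows "subanalytic_fun n X h"
proof -
  txt \<open>The graph of \<open>h\<close> is the projection of the set of \<open>xs @ [z, a, b]\<close> with
    \<open>xs @ [a]\<close> in the graph of \<open>f\<close>, \<open>xs @ [b]\<close> in that of \<open>g\<close> and \<open>[a, b, z] \<in> R\<close>;
    \<open>s1\<close>, \<open>s2\<close>, \<open>s3\<close> pick out these three coordinate tuples.\<close>
  let ?Gf = "{xs @ [f xs] | xs. xs \<in> X}" and ?Gg = "{xs @ [g xs] | xs. xs \<in> X}"
  define s1 where "s1 i = (if i < n then i else Suc n)" for i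
  define s2 where "s2 i = (if i < n then i else Suc (Suc n))" for i
  define s3 where "s3 i = [Suc n, Suc (Suc n), n] ! i" for i
  define P where "P w \<longleftrightarrow> map (\<lambda>i. w ! s1 i) [0..<Suc n] \<in> ?Gf
      \<and> map (\<lambda>i. w ! s2 i) [0..<Suc n] \<in> ?Gg \<and> map (\<lambda>i. w ! s3 i) [0..<3] \<in> R" for w
  have "subanalytic (Suc n + 2) {w \<in> Ln (Suc n + 2). map (\<lambda>i. w ! s1 i) [0..<Suc n] \<in> ?Gf}"
    using F unfolding subanalytic_fun_def by (rule subanalytic_preimage_coords) (auto simp: s1_def)
  moreover have "subanalytic (Suc n + 2) {w \<in> Ln (Suc n + 2). map (\<lambda>i. w ! s2 i) [0..<Suc n] \<in> ?Gg}"
    using G unfolding subanalytic_fun_def by (rule subanalytic_preimage_coords) (auto simp: s2_def)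
  moreover have "subanalytic (Suc n + 2) {w \<in> Ln (Suc n + 2). map (\<lambda>i. w ! s3 i) [0..<3] \<in> R}"
    using R by (rule subanalytic_preimage_coords)
      (auto simp: s3_def less_Suc_eq numeral_3_eq_3 nth_Cons split: nat.split)
  ultimately have "subanalytic (Suc n + 2) {w \<in> Ln (Suc n + 2). P w}"
    unfolding P_def by (intro subanalytic_Collect_conj)
  then have proj: "subanalytic (Suc n) {v \<in> Ln (Suc n). \<exists>ys. length ys = 2 \<and> P (v @ ys)}"
    by (rule subanalytic_exists_suffix)
  have P_iff: "P (xs @ [z] @ [a, b]) \<longleftrightarrow> xs \<in> X \<and> a = f xs \<and> b = g xs \<and> [a, b, z] \<in> R"
    if "length xs = n" for xs z a b
  proof -
    have "map (\<lambda>i. (xs @ [z] @ [a, b]) ! s1 i) [0..<Suc n] = xs @ [a]"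
      "map (\<lambda>i. (xs @ [z] @ [a, b]) ! s2 i) [0..<Suc n] = xs @ [b]"
      using that by (auto intro: nth_equalityI simp: nth_append s1_def s2_def less_Suc_eq)
    moreover have "map (\<lambda>i. (xs @ [z] @ [a, b]) ! s3 i) [0..<3] = [a, b, z]"
      using that by (simp add: s3_def numeral_3_eq_3 nth_append)
    ultimately show ?thesis unfolding P_def by auto
  qed
  have "{v \<in> Ln (Suc n). \<exists>ys. length ys = 2 \<and> P (v @ ys)} = {xs @ [h xs] | xs. xs \<in> X}"
  proof (intro set_eqI iffI)
    fix v assume "v \<in> {v \<in> Ln (Suc n). \<exists>ys. length ys = 2 \<and> P (v @ ys)}"
    then obtain ys where "length v = Suc n" "length ys = 2" "P (v @ ys)" by (auto simp: Ln_def)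
    moreover obtain xs z where "v = xs @ [z]" "length xs = n"
      using \<open>length v = Suc n\<close> by (metis length_Suc_conv_rev)
    moreover obtain a b where "ys = [a, b]"
      using \<open>length ys = 2\<close> by (auto simp: numeral_2_eq_2 length_Suc_conv)
    ultimately have "xs \<in> X" "[f xs, g xs, z] \<in> R" using P_iff by auto
    then show "v \<in> {xs @ [h xs] | xs. xs \<in> X}" using H \<open>v = xs @ [z]\<close> by auto
  next
    fix v assume "v \<in> {xs @ [h xs] | xs. xs \<in> X}"
    then obtain xs where "v = xs @ [h xs]" "xs \<in> X" by blast
    moreover have "length xs = n"
      using \<open>xs \<in> X\<close> subanalytic_subset_Ln[OF subanalytic_fun_domain[OF F]] by (auto simp: Ln_def)
    ultimately have "length v = Suc n" "P (v @ [f xs, g xs])" using P_iff H by auto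
    then show "v \<in> {v \<in> Ln (Suc n). \<exists>ys. length ys = 2 \<and> P (v @ ys)}"
      by (auto simp: Ln_def intro!: exI[of _ "[f xs, g xs]"])
  qed
  then show ?thesis using proj unfolding subanalytic_fun_def by simp
qed

lemma subanalytic_fun_add:
  "subanalytic_fun n X f \<Longrightarrow> subanalytic_fun n X g \<Longrightarrow> subanalytic_fun n X (\<lambda>x. f x + g x)"
  by (erule subanalytic_fun_combine[OF _ _ sa_add]) auto

lemma subanalytic_fun_mult:
  "subanalytic_fun n X f \<Longrightarrow> subanalytic_fun n X g \<Longrightarrow> subanalytic_fun n X (\<lambda>x. f x * g x)"
  by (erule subanalytic_fun_combine[OF _ _ sa_mult]) auto

lemma subanalytic_fun_inverse:
  assumes G: "subanalytic_fun n X g" and pos: "\<forall>x\<in>X. g x > 0"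
  shows "subanalytic_fun n X (\<lambda>x. 1 / g x)"
proof -
  define R where "R = {w \<in> Ln 3. map (\<lambda>i. w ! ([2, 0, 1] ! i)) [0..<3] \<in> {[x, y, x * y] | x y. True}}"
  have R: "subanalytic 3 R"
    unfolding R_def by (rule subanalytic_preimage_coords[OF sa_mult])
      (auto simp: numeral_3_eq_3 less_Suc_eq nth_Cons split: nat.split)
  have mem_R: "[a, b, z] \<in> R \<longleftrightarrow> b = z * a" for a b z :: real
    by (simp add: R_def Ln_def numeral_3_eq_3)
  show ?thesis
  proof (rule subanalytic_fun_combine[OF G subanalytic_fun_const[OF subanalytic_fun_domain[OF G]] R])
    show "\<forall>x\<in>X. \<forall>z. [g x, 1, z] \<in> R \<longleftrightarrow> z = 1 / g x"
      using pos by (auto simp: mem_R field_simps)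
  qed
qed

lemma abs_le_one_plus_square: "\<bar>x :: real\<bar> \<le> 1 + x * x"
proof -
  have "0 \<le> (\<bar>x\<bar> - 1/2)\<^sup>2" by simp
  then have "\<bar>x\<bar> \<le> 1 + \<bar>x\<bar> * \<bar>x\<bar>" by (simp add: power2_eq_square algebra_simps)
  then show ?thesis by (simp add: abs_mult_self_eq)
qed

lemma abs_ln_le_add_inverse:
  fixes x :: real
  assumes "0 < x"
  shows "\<bar>ln x\<bar> \<le> x + 1 / x"
proof (rule abs_leI)
  have "0 < 1 / x" using assms by simp
  moreover have "ln x \<le> x - 1" using assms by (rule ln_le_minus_one)
  moreover have "- ln x \<le> 1 / x - 1"
    using ln_le_minus_one[of "1 / x"] assms by (simp add: ln_div)
  ultimately show "ln x \<le> x + 1 / x" "- ln x \<le> x + 1 / x" using assms by linarith+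
qed

definition subanalytically_bounded :: "nat \<Rightarrow> real list set \<Rightarrow> (real list \<Rightarrow> real) \<Rightarrow> bool" where
  "subanalytically_bounded n X f \<longleftrightarrow>
     (\<exists>h. subanalytic_fun n X h \<and> (\<forall>x\<in>X. 0 < h x \<and> \<bar>f x\<bar> \<le> h x))"

lemma subanalytically_bounded_subanalytic_fun:
  assumes "subanalytic_fun n X f"
  shows "subanalytically_bounded n X f"
proof -
  have "subanalytic_fun n X (\<lambda>x. 1 + f x * f x)"
    using assms subanalytic_fun_domain[OF assms]
    by (intro subanalytic_fun_add subanalytic_fun_mult subanalytic_fun_const)
  moreover have "0 < 1 + f x * f x" for x
    by (simp add: add_pos_nonneg)
  ultimately show ?thesis
    unfolding subanalytically_bounded_def using abs_le_one_plus_square by blast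
qed

lemma subanalytically_bounded_ln:
  assumes "subanalytic_fun n X g" and "\<forall>x\<in>X. 0 < g x"
  shows "subanalytically_bounded n X (\<lambda>x. ln (g x))"
proof -
  have "subanalytic_fun n X (\<lambda>x. g x + 1 / g x)"
    using assms by (intro subanalytic_fun_add subanalytic_fun_inverse)
  moreover have "0 < g x + 1 / g x \<and> \<bar>ln (g x)\<bar> \<le> g x + 1 / g x" if "x \<in> X" for x
    using assms(2) that abs_ln_le_add_inverse[of "g x"] by (simp add: add_pos_pos)
  ultimately show ?thesis
    unfolding subanalytically_bounded_def by blast
qed

lemma subanalytically_bounded_add:
  assumes "subanalytically_bounded n X f" and "subanalytically_bounded n X g"
  shows "subanalytically_bounded n X (\<lambda>x. f x + g x)"
proof -
  obtain h1 h2 where "subanalytic_fun n X h1" "\<forall>x\<in>X. 0 < h1 x \<and> \<bar>f x\<bar> \<le> h1 x"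
    and "subanalytic_fun n X h2" "\<forall>x\<in>X. 0 < h2 x \<and> \<bar>g x\<bar> \<le> h2 x"
    using assms unfolding subanalytically_bounded_def by blast
  moreover have "\<bar>f x + g x\<bar> \<le> h1 x + h2 x" if "\<bar>f x\<bar> \<le> h1 x" "\<bar>g x\<bar> \<le> h2 x" for x
    using that abs_triangle_ineq[of "f x" "g x"] by linarith
  ultimately show ?thesis
    unfolding subanalytically_bounded_def
    by (intro exI[of _ "\<lambda>x. h1 x + h2 x"]) (auto intro: subanalytic_fun_add add_pos_pos)
qed

lemma subanalytically_bounded_mult:
  assumes "subanalytically_bounded n X f" and "subanalytically_bounded n X g"
  shows "subanalytically_bounded n X (\<lambda>x. f x * g x)"
proof -
  obtain h1 h2 where "subanalytic_fun n X h1" "\<forall>x\<in>X. 0 < h1 x \<and> \<bar>f x\<bar> \<le> h1 x"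
    and "subanalytic_fun n X h2" "\<forall>x\<in>X. 0 < h2 x \<and> \<bar>g x\<bar> \<le> h2 x"
    using assms unfolding subanalytically_bounded_def by blast
  then show ?thesis
    unfolding subanalytically_bounded_def
    by (intro exI[of _ "\<lambda>x. h1 x * h2 x"]) (auto intro: subanalytic_fun_mult simp: abs_mult mult_mono')
qed

lemma subanalytically_bounded_scale:
  assumes "subanalytically_bounded n X f"
  shows "subanalytically_bounded n X (\<lambda>x. c * f x)"
proof -
  obtain h where h: "subanalytic_fun n X h" and bound: "\<forall>x\<in>X. 0 < h x \<and> \<bar>f x\<bar> \<le> h x"
    using assms unfolding subanalytically_bounded_def by blast
  have "subanalytic_fun n X (\<lambda>x. (\<bar>c\<bar> + 1) * h x)"
    using h subanalytic_fun_domain[OF h] by (intro subanalytic_fun_mult subanalytic_fun_const)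
  moreover have "\<bar>c * f x\<bar> \<le> (\<bar>c\<bar> + 1) * h x" if "x \<in> X" for x
  proof -
    have "\<bar>c * f x\<bar> = \<bar>c\<bar> * \<bar>f x\<bar>" by (simp add: abs_mult)
    also have "\<dots> \<le> (\<bar>c\<bar> + 1) * h x" using bound that by (intro mult_mono) auto
    finally show ?thesis .
  qed
  ultimately show ?thesis
    unfolding subanalytically_bounded_def using bound by (intro exI) auto
qed

lemma subanalytically_bounded_cong:
  "subanalytically_bounded n X f \<Longrightarrow> \<forall>x\<in>X. f x = g x \<Longrightarrow> subanalytically_bounded n X g"
  by (fastforce simp: subanalytically_bounded_def)

theorem lemma7p1:
  fixes n :: nat and X :: "real list set" and f :: "real list \<Rightarrow> real"
  assumes "subanalytic n X"
    and "constructible n X f"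
  shows "\<exists>h. subanalytic_fun n X h \<and> (\<forall>x\<in>X. 0 < h x \<and> \<bar>f x\<bar> \<le> h x)"
proof -
  from assms(2) have "subanalytically_bounded n X f"
  proof (induction rule: constructible.induct)
    case (c_sa f)
    then show ?case by (rule subanalytically_bounded_subanalytic_fun)
  next
    case (c_log g)
    then show ?case by (rule subanalytically_bounded_ln)
  next
    case (c_add f g)
    from c_add.IH show ?case by (rule subanalytically_bounded_add)
  next
    case (c_mult f g)
    from c_mult.IH show ?case by (rule subanalytically_bounded_mult)
  next
    case (c_scale f c)
    from c_scale.IH show ?case by (rule subanalytically_bounded_scale)
  next
    case (c_cong f g)
    from c_cong.IH c_cong.hyps(2) show ?case by (rule subanalytically_bounded_cong)
  qed
  then show ?thesis unfolding subanalytically_bounded_def .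
qed

end
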